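(* Let $X$ be a joinable uniform space. If $\mathrm{pro}\text{-}\pi_1(X,x_0)$ satisfies the strong Mittag-Leffler condition for some $x_0\in X$, then $X$ is uniformly joinable.
   Context: $R(X,E)$ is the Rips complex of $X$ (vertex set $X$, simplices the finite $F$ with $F\times F\subset E$, weak topology); $e(x,y)$ is the edge-path. $\mathrm{pro}\text{-}\pi_1(X,x_0)$ is the inverse system $\{\pi_1(R(X,E),x_0)\}_E$ indexed by entourages ordered by reverse inclusion, with inverse limit $\check\pi_1(X,x_0)$. A generalized path from $x$ to $y$ is a family $\{[c_E]\}_E$ of homotopy classes rel. end-points of paths from $x$ to $y$ in $R(X,E)$ with $c_F\simeq c_E$ rel. end-points in $R(X,E)$ for $F\subset E$; it is $F$-short if $(x,y)\in F$ and $c_F\simeq e(x,y)$ rel. end-points in $R(X,F)$. $X$ is joinable if any two points are joined by a generalized path; uniformly joinable if for each entourage $E$ there is an entourage $F$ such that any $(x,y)\in F$ are joined by an $E$-short generalized path. An inverse system of groups $\{G_a\}$ with limit $G$ satisfies the strong Mittag-Leffler condition if for every $a$ there is $b>a$ with $\mathrm{im}(G_b\to G_a)\subset\mathrm{im}(G\to G_a)$. *)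

theory Defs
  imports "HOL-Analysis.Analysis"
begin

definition entourages :: "('a \<times> 'a) filter \<Rightarrow> ('a \<times> 'a) set set" where
  "entourages U = {E. eventually (\<lambda>p. p \<in> E) U}"

text \<open>Rips complex R(X,E), vertex set the whole type. Points of the geometric
  realization are barycentric-coordinate functions 'a => real.\<close>
definition rips_simplices :: "('a \<times> 'a) set \<Rightarrow> 'a set set" where
  "rips_simplices E = {\<sigma>. finite \<sigma> \<and> \<sigma> \<noteq> {} \<and> \<sigma> \<times> \<sigma> \<subseteq> E}"

definition simplex_real :: "'a set \<Rightarrow> ('a \<Rightarrow> real) set" where
  "simplex_real \<sigma> = {t. (\<forall>z. 0 \<le> t z) \<and> (\<forall>z. z \<notin> \<sigma> \<longrightarrow> t z = 0) \<and> sum t \<sigma> = 1}"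

definition rips_carrier :: "('a \<times> 'a) set \<Rightarrow> ('a \<Rightarrow> real) set" where
  "rips_carrier E = \<Union> (simplex_real ` rips_simplices E)"

text \<open>Weak topology: U is open iff its trace on every closed simplex is open
  (each closed simplex carrying its Euclidean topology, i.e. the subspace
  topology from the product topology on 'a => real).\<close>
definition rips_top :: "('a \<times> 'a) set \<Rightarrow> ('a \<Rightarrow> real) topology" where
  "rips_top E = topology (\<lambda>U. U \<subseteq> rips_carrier E \<and>
     (\<forall>\<sigma>\<in>rips_simplices E. openin (top_of_set (simplex_real \<sigma>)) (U \<inter> simplex_real \<sigma>)))"

definition vtx :: "'a \<Rightarrow> 'a \<Rightarrow> real" where
  "vtx x = (\<lambda>z. if z = x then 1 else 0)"

definition edge_path :: "'a \<Rightarrow> 'a \<Rightarrow> real \<Rightarrow> 'a \<Rightarrow> real" where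
  "edge_path x y = (\<lambda>s z. (1 - s) * vtx x z + s * vtx y z)"

definition path_homotopic :: "'b topology \<Rightarrow> (real \<Rightarrow> 'b) \<Rightarrow> (real \<Rightarrow> 'b) \<Rightarrow> bool" where
  "path_homotopic T p q =
     homotopic_with (\<lambda>r. r 0 = p 0 \<and> r 1 = p 1) (top_of_set {0..1}) T p q"

text \<open>Generalized path from x to y: a compatible family of (representatives of)
  homotopy classes rel end-points of paths from x to y in each R(X,E).\<close>
definition gen_path :: "('a \<times> 'a) filter \<Rightarrow> 'a \<Rightarrow> 'a \<Rightarrow>
    (('a \<times> 'a) set \<Rightarrow> real \<Rightarrow> 'a \<Rightarrow> real) \<Rightarrow> bool" where
  "gen_path U x y c \<longleftrightarrow>
     (\<forall>E\<in>entourages U. pathin (rips_top E) (c E) \<and> c E 0 = vtx x \<and> c E 1 = vtx y) \<and>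
     (\<forall>E\<in>entourages U. \<forall>F\<in>entourages U. F \<subseteq> E \<longrightarrow>
        path_homotopic (rips_top E) (c F) (c E))"

definition short_gen_path :: "('a \<times> 'a) filter \<Rightarrow> ('a \<times> 'a) set \<Rightarrow> 'a \<Rightarrow> 'a \<Rightarrow>
    (('a \<times> 'a) set \<Rightarrow> real \<Rightarrow> 'a \<Rightarrow> real) \<Rightarrow> bool" where
  "short_gen_path U F x y c \<longleftrightarrow>
     gen_path U x y c \<and> (x, y) \<in> F \<and> path_homotopic (rips_top F) (c F) (edge_path x y)"

definition joinable :: "('a \<times> 'a) filter \<Rightarrow> bool" where
  "joinable U \<longleftrightarrow> (\<forall>x y. \<exists>c. gen_path U x y c)"

definition uniformly_joinable :: "('a \<times> 'a) filter \<Rightarrow> bool" where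
  "uniformly_joinable U \<longleftrightarrow>
     (\<forall>E\<in>entourages U. \<exists>F\<in>entourages U. \<forall>x y. (x, y) \<in> F \<longrightarrow>
        (\<exists>c. short_gen_path U E x y c))"

text \<open>Strong Mittag-Leffler condition for pro-pi_1(X,x0): for every entourage E
  there is an entourage F \<subseteq> E such that the image of pi_1(R(X,F),x0) in
  pi_1(R(X,E),x0) lies in the image of the inverse limit. Elements of the
  inverse limit are exactly the generalized loops at x0; the bonding maps are
  induced by the inclusions R(X,F) \<subseteq> R(X,E).\<close>
definition pro_pi1_strong_ML :: "('a \<times> 'a) filter \<Rightarrow> 'a \<Rightarrow> bool" where
  "pro_pi1_strong_ML U x0 \<longleftrightarrow>
     (\<forall>E\<in>entourages U. \<exists>F\<in>entourages U. F \<subseteq> E \<and>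
        (\<forall>c. pathin (rips_top F) c \<and> c 0 = vtx x0 \<and> c 1 = vtx x0 \<longrightarrow>
           (\<exists>d. gen_path U x0 x0 d \<and> path_homotopic (rips_top E) (d E) c)))"

end

theory Submission
  imports Defs
begin

(* Fix an entourage E and let F \<subseteq> E be the entourage given by the
   strong Mittag-Leffler condition; we show that the symmetric entourage F \<inter> F\<inverse>
   witnesses uniform joinability for E.  For (x, y) in it, joinability provides
   generalized paths a from x0 to x and b from x0 to y.  The loop
   L = (a_F \<cdot> e(x,y)) \<cdot> b_F\<inverse> at x0 lives in R(X,F), so the Mittag-Leffler condition
   yields a generalized loop d at x0 with d_E \<simeq> L in R(X,E).  Then
   c = a\<inverse> \<cdot> d \<cdot> b is a generalized path from x to y, and in R(X,E)
     c_E \<simeq> a_E\<inverse> \<cdot> (((a_E \<cdot> e) \<cdot> b_E\<inverse>) \<cdot> b_E) \<simeq> a_E\<inverse> \<cdot> (a_E \<cdot> e) \<simeq> e,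
   so c is E-short. *)

lemma continuous_map_join_halves:
  fixes k1 k2 :: "'z \<times> real \<Rightarrow> 'b"
  assumes k1: "continuous_map (prod_topology Z (top_of_set {0..1})) T k1"
    and k2: "continuous_map (prod_topology Z (top_of_set {0..1})) T k2"
    and glue: "\<And>z. z \<in> topspace Z \<Longrightarrow> k1 (z, 1) = k2 (z, 0)"
  shows "continuous_map (prod_topology Z (top_of_set {0..1})) T
           (\<lambda>w. if snd w \<le> 1/2 then k1 (fst w, 2 * snd w) else k2 (fst w, 2 * snd w - 1))"
proof (rule continuous_map_cases_le)
  let ?ZI = "prod_topology Z (top_of_set {0..1::real})"
  show snd: "continuous_map ?ZI euclideanreal snd"
    using continuous_map_snd continuous_map_in_subtopology by blast
  show "continuous_map ?ZI euclideanreal (\<lambda>w. 1/2)" by simp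
  show "continuous_map (subtopology ?ZI {w \<in> topspace ?ZI. snd w \<le> 1/2}) T (\<lambda>w. k1 (fst w, 2 * snd w))"
    apply (intro snd continuous_map_compose [OF _ k1, unfolded o_def] continuous_intros continuous_map_into_subtopology continuous_map_from_subtopology | simp)+
    by (force simp: prod_topology_subtopology)
  show "continuous_map (subtopology ?ZI {w \<in> topspace ?ZI. 1/2 \<le> snd w}) T (\<lambda>w. k2 (fst w, 2 * snd w - 1))"
    apply (intro snd continuous_map_compose [OF _ k2, unfolded o_def] continuous_intros continuous_map_into_subtopology continuous_map_from_subtopology | simp)+
    by (force simp: prod_topology_subtopology)
  show "k1 (fst w, 2 * snd w) = k2 (fst w, 2 * snd w - 1)" if "w \<in> topspace ?ZI" "snd w = 1/2" for w
  proof -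
    have "2 * snd w = 1" using that(2) by simp
    then show ?thesis using that(1) by (simp add: glue mem_Times_iff)
  qed
qed

lemma joinpaths_at_0 [simp]: "(p +++ q) 0 = p 0"
  and joinpaths_at_1 [simp]: "(p +++ q) 1 = q 1"
  and reversepath_at_0 [simp]: "reversepath p 0 = p 1"
  and reversepath_at_1 [simp]: "reversepath p 1 = p 0"
  by (simp_all add: joinpaths_def reversepath_def)

lemma path_homotopic_imp_paths:
  assumes "path_homotopic T p q"
  shows "pathin T p \<and> pathin T q \<and> q 0 = p 0 \<and> q 1 = p 1"
  using homotopic_with_imp_continuous_maps[OF assms[unfolded path_homotopic_def]]
    homotopic_with_imp_property[OF assms[unfolded path_homotopic_def]]
  by (simp add: pathin_def)

lemma path_homotopic_refl: "pathin T p \<Longrightarrow> path_homotopic T p p"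
  by (simp add: path_homotopic_def pathin_def)

lemma path_homotopic_sym:
  assumes "path_homotopic T p q"
  shows "path_homotopic T q p"
proof -
  have "q 0 = p 0" "q 1 = p 1" using path_homotopic_imp_paths[OF assms] by auto
  then show ?thesis using assms unfolding path_homotopic_def by (simp add: homotopic_with_sym)
qed

lemma path_homotopic_trans [trans]:
  assumes "path_homotopic T p q" and "path_homotopic T q r"
  shows "path_homotopic T p r"
proof -
  have q01: "q 0 = p 0" "q 1 = p 1" using path_homotopic_imp_paths[OF assms(1)] by auto
  show ?thesis using assms unfolding path_homotopic_def q01 by (rule homotopic_with_trans)
qed

lemma path_homotopic_join:
  assumes h: "path_homotopic T p p'" and g: "path_homotopic T q q'" and pq: "p 1 = q 0"
  shows "path_homotopic T (p +++ q) (p' +++ q')"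
proof -
  obtain k1 :: "real \<times> real \<Rightarrow> _"
    where k1: "continuous_map (prod_topology (top_of_set {0..1}) (top_of_set {0..1})) T k1"
    "\<And>t. k1 (0, t) = p t" "\<And>t. k1 (1, t) = p' t"
    "\<And>s. s \<in> {0..1} \<Longrightarrow> k1 (s, 0) = p 0 \<and> k1 (s, 1) = p 1"
    using h unfolding path_homotopic_def homotopic_with_def by blast
  obtain k2 :: "real \<times> real \<Rightarrow> _"
    where k2: "continuous_map (prod_topology (top_of_set {0..1}) (top_of_set {0..1})) T k2"
    "\<And>t. k2 (0, t) = q t" "\<And>t. k2 (1, t) = q' t"
    "\<And>s. s \<in> {0..1} \<Longrightarrow> k2 (s, 0) = q 0 \<and> k2 (s, 1) = q 1"
    using g unfolding path_homotopic_def homotopic_with_def by blast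
  define k where "k = (\<lambda>w. if snd w \<le> 1/2 then k1 (fst w, 2 * snd w) else k2 (fst w, 2 * snd w - 1))"
  have "continuous_map (prod_topology (top_of_set {0..1}) (top_of_set {0..1})) T k"
    unfolding k_def
  proof (rule continuous_map_join_halves[OF k1(1) k2(1)])
    fix s :: real assume "s \<in> topspace (top_of_set {0..1})"
    then show "k1 (s, 1) = k2 (s, 0)" using k1(4) k2(4) pq by simp
  qed
  moreover have "k (0, t) = (p +++ q) t" "k (1, t) = (p' +++ q') t" for t
    by (simp_all add: k_def joinpaths_def k1 k2)
  moreover have "k (s, 0) = (p +++ q) 0 \<and> k (s, 1) = (p +++ q) 1" if "s \<in> {0..1}" for s
    using k1(4)[OF that] k2(4)[OF that] by (simp add: k_def joinpaths_def)
  ultimately show ?thesis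
    unfolding path_homotopic_def homotopic_with_def by blast
qed

lemma path_homotopic_reverse:
  assumes "path_homotopic T p q"
  shows "path_homotopic T (reversepath p) (reversepath q)"
proof -
  have flip: "continuous_map (top_of_set {0..1}) (top_of_set {0..1}) (\<lambda>t::real. 1 - t)"
    by (auto intro!: continuous_intros)
  have "homotopic_with (\<lambda>r. r 0 = p 1 \<and> r 1 = p 0) (top_of_set {0..1}) T
          (p \<circ> (\<lambda>t. 1 - t)) (q \<circ> (\<lambda>t. 1 - t))"
    by (rule homotopic_with_compose_continuous_map_right[OF assms[unfolded path_homotopic_def] flip]) auto
  then show ?thesis by (simp add: path_homotopic_def reversepath_def o_def)
qed

lemma pathin_join: "\<lbrakk>pathin T p; pathin T q; p 1 = q 0\<rbrakk> \<Longrightarrow> pathin T (p +++ q)"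
  by (metis path_homotopic_imp_paths path_homotopic_join path_homotopic_refl)

lemma pathin_reverse: "pathin T p \<Longrightarrow> pathin T (reversepath p)"
  by (metis path_homotopic_imp_paths path_homotopic_reverse path_homotopic_refl)

(* Transport principle: a homotopy of paths inside the unit interval, composed
   with a path p, is a homotopy of reparametrisations of p.  This turns the
   Euclidean groupoid laws of the library into laws in any space. *)
lemma path_homotopic_compose_unit_interval:
  assumes "homotopic_paths {0..1} f g" and p: "pathin T p"
  shows "path_homotopic T (p \<circ> f) (p \<circ> g)"
proof -
  have "homotopic_with (\<lambda>r. r 0 = (p \<circ> f) 0 \<and> r 1 = (p \<circ> f) 1) (top_of_set {0..1}) T (p \<circ> f) (p \<circ> g)"
    using assms(1) unfolding homotopic_paths_def
    by (rule homotopic_with_compose_continuous_map_left)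
       (use p in \<open>auto simp: pathin_def pathstart_def pathfinish_def\<close>)
  then show ?thesis by (simp add: path_homotopic_def)
qed

lemma path_homotopic_rid:
  assumes "pathin T p"
  shows "path_homotopic T (p +++ (\<lambda>_. p 1)) p"
proof -
  have "homotopic_paths {0..1} (id +++ linepath 1 1) id"
    using homotopic_paths_rid[of id "{0..1::real}"] by (simp add: path_def path_image_def pathfinish_def)
  moreover have "p \<circ> (id +++ linepath 1 1) = p +++ (\<lambda>_. p 1)"
    by (simp add: fun_eq_iff joinpaths_def linepath_def)
  ultimately show ?thesis
    using path_homotopic_compose_unit_interval[OF _ assms] by fastforce
qed

lemma path_homotopic_lid:
  assumes "pathin T p"
  shows "path_homotopic T ((\<lambda>_. p 0) +++ p) p"
proof -
  have "homotopic_paths {0..1} (linepath 0 0 +++ id) id"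
    using homotopic_paths_lid[of id "{0..1::real}"] by (simp add: path_def path_image_def pathstart_def)
  moreover have "p \<circ> (linepath 0 0 +++ id) = (\<lambda>_. p 0) +++ p"
    by (simp add: fun_eq_iff joinpaths_def linepath_def)
  ultimately show ?thesis
    using path_homotopic_compose_unit_interval[OF _ assms] by fastforce
qed

lemma path_homotopic_rinv:
  assumes "pathin T p"
  shows "path_homotopic T (p +++ reversepath p) (\<lambda>_. p 0)"
proof -
  have "homotopic_paths {0..1} (id +++ reversepath id) (linepath 0 0)"
    using homotopic_paths_rinv[of id "{0..1::real}"] by (simp add: path_def path_image_def pathstart_def)
  moreover have "p \<circ> (id +++ reversepath id) = p +++ reversepath p"
    by (simp add: fun_eq_iff joinpaths_def reversepath_def)
  moreover have "p \<circ> linepath 0 0 = (\<lambda>_. p 0)"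
    by (simp add: fun_eq_iff linepath_def)
  ultimately show ?thesis
    using path_homotopic_compose_unit_interval[OF _ assms] by metis
qed

(* Associativity: p \<cdot> (q \<cdot> r) is a reparametrisation of (p \<cdot> q) \<cdot> r. *)
lemma path_homotopic_assoc:
  assumes p: "pathin T p" and q: "pathin T q" and r: "pathin T r"
    and pq: "p 1 = q 0" and qr: "q 1 = r 0"
  shows "path_homotopic T (p +++ (q +++ r)) ((p +++ q) +++ r)"
proof -
  define f :: "real \<Rightarrow> real"
    where "f t = (if t \<le> 1/2 then inverse 2 * t else if t \<le> 3/4 then t - 1/4 else 2 * t - 1)" for t
  have "continuous_on {0..1} f"
    unfolding f_def by (rule continuous_on_cases_1 continuous_intros | auto)+
  then have "homotopic_paths {0..1} id f"
    by (intro homotopic_paths_reparametrize[of id "{0..1}" f]) (auto simp: path_def path_image_def f_def)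
  then have "homotopic_paths {0..1} f id"
    by (rule homotopic_paths_sym)
  moreover have "((p +++ q) +++ r) \<circ> f = p +++ (q +++ r)"
    by (simp add: fun_eq_iff f_def joinpaths_def)
  moreover have "pathin T ((p +++ q) +++ r)"
    using p q r pq qr by (simp add: pathin_join)
  ultimately show ?thesis
    using path_homotopic_compose_unit_interval by fastforce
qed

lemma path_homotopic_cancel_left:
  assumes a: "pathin T a" and q: "pathin T q" and aq: "a 1 = q 0"
  shows "path_homotopic T (reversepath a +++ (a +++ q)) q"
proof -
  have ra: "pathin T (reversepath a)" using a by (rule pathin_reverse)
  have "path_homotopic T (reversepath a +++ (a +++ q)) ((reversepath a +++ a) +++ q)"
    using path_homotopic_assoc[OF ra a q] aq by simp
  also have "path_homotopic T \<dots> ((\<lambda>_. q 0) +++ q)"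
    using path_homotopic_join[OF path_homotopic_rinv[OF ra] path_homotopic_refl[OF q]] aq by simp
  also have "path_homotopic T \<dots> q"
    using q by (rule path_homotopic_lid)
  finally show ?thesis .
qed

lemma path_homotopic_cancel_right:
  assumes q: "pathin T q" and b: "pathin T b" and qb: "q 1 = b 1"
  shows "path_homotopic T ((q +++ reversepath b) +++ b) q"
proof -
  have rb: "pathin T (reversepath b)" using b by (rule pathin_reverse)
  have "path_homotopic T ((q +++ reversepath b) +++ b) (q +++ (reversepath b +++ b))"
    using path_homotopic_sym[OF path_homotopic_assoc[OF q rb b]] qb by simp
  also have "path_homotopic T \<dots> (q +++ (\<lambda>_. q 1))"
    using path_homotopic_join[OF path_homotopic_refl[OF q] path_homotopic_rinv[OF rb]] qb by simp
  also have "path_homotopic T \<dots> q"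
    using q by (rule path_homotopic_rid)
  finally show ?thesis .
qed

lemma openin_rips_top:
  "openin (rips_top E) U \<longleftrightarrow> U \<subseteq> rips_carrier E \<and>
     (\<forall>\<sigma>\<in>rips_simplices E. openin (top_of_set (simplex_real \<sigma>)) (U \<inter> simplex_real \<sigma>))"
proof -
  have "istopology (\<lambda>U. U \<subseteq> rips_carrier E \<and>
     (\<forall>\<sigma>\<in>rips_simplices E. openin (top_of_set (simplex_real \<sigma>)) (U \<inter> simplex_real \<sigma>)))"
    unfolding istopology_def
  proof (rule conjI; intro allI impI)
    fix S T :: "('a \<Rightarrow> real) set"
    assume S: "S \<subseteq> rips_carrier E \<and> (\<forall>\<sigma>\<in>rips_simplices E. openin (top_of_set (simplex_real \<sigma>)) (S \<inter> simplex_real \<sigma>))"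
      and T: "T \<subseteq> rips_carrier E \<and> (\<forall>\<sigma>\<in>rips_simplices E. openin (top_of_set (simplex_real \<sigma>)) (T \<inter> simplex_real \<sigma>))"
    show "S \<inter> T \<subseteq> rips_carrier E \<and> (\<forall>\<sigma>\<in>rips_simplices E. openin (top_of_set (simplex_real \<sigma>)) (S \<inter> T \<inter> simplex_real \<sigma>))"
    proof (intro conjI ballI)
      show "S \<inter> T \<subseteq> rips_carrier E" using S by blast
      fix \<sigma> assume "\<sigma> \<in> rips_simplices E"
      then have "openin (top_of_set (simplex_real \<sigma>)) ((S \<inter> simplex_real \<sigma>) \<inter> (T \<inter> simplex_real \<sigma>))"
        using S T by (blast intro: openin_Int)
      moreover have "(S \<inter> simplex_real \<sigma>) \<inter> (T \<inter> simplex_real \<sigma>) = S \<inter> T \<inter> simplex_real \<sigma>" by blast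
      ultimately show "openin (top_of_set (simplex_real \<sigma>)) (S \<inter> T \<inter> simplex_real \<sigma>)" by simp
    qed
  next
    fix K :: "('a \<Rightarrow> real) set set"
    assume K: "\<forall>S\<in>K. S \<subseteq> rips_carrier E \<and> (\<forall>\<sigma>\<in>rips_simplices E. openin (top_of_set (simplex_real \<sigma>)) (S \<inter> simplex_real \<sigma>))"
    show "\<Union>K \<subseteq> rips_carrier E \<and> (\<forall>\<sigma>\<in>rips_simplices E. openin (top_of_set (simplex_real \<sigma>)) (\<Union>K \<inter> simplex_real \<sigma>))"
    proof (intro conjI ballI)
      show "\<Union>K \<subseteq> rips_carrier E" using K by blast
      fix \<sigma> assume "\<sigma> \<in> rips_simplices E"
      then have "openin (top_of_set (simplex_real \<sigma>)) (\<Union>S\<in>K. S \<inter> simplex_real \<sigma>)"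
        using K by (intro openin_Union) auto
      moreover have "(\<Union>S\<in>K. S \<inter> simplex_real \<sigma>) = \<Union>K \<inter> simplex_real \<sigma>" by blast
      ultimately show "openin (top_of_set (simplex_real \<sigma>)) (\<Union>K \<inter> simplex_real \<sigma>)" by simp
    qed
  qed
  then show ?thesis
    unfolding rips_top_def by (simp add: topology_inverse')
qed

lemma simplex_subset_rips_carrier: "\<sigma> \<in> rips_simplices E \<Longrightarrow> simplex_real \<sigma> \<subseteq> rips_carrier E"
  unfolding rips_carrier_def by blast

lemma topspace_rips_top: "topspace (rips_top E) = rips_carrier E"
proof
  show "topspace (rips_top E) \<subseteq> rips_carrier E"
    unfolding topspace_def openin_rips_top by blast
  have "openin (rips_top E) (rips_carrier E)"
    unfolding openin_rips_top by (simp add: Int_absorb1 simplex_subset_rips_carrier)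
  then show "rips_carrier E \<subseteq> topspace (rips_top E)"
    by (rule openin_subset)
qed

(* For F \<subseteq> E the complex R(X,F) is a subcomplex of R(X,E), and the inclusion is
   continuous; this is the bonding map of pro-\<pi>\<^sub>1. *)
lemma continuous_map_rips_inclusion:
  assumes "F \<subseteq> E"
  shows "continuous_map (rips_top F) (rips_top E) id"
proof -
  have simplices: "rips_simplices F \<subseteq> rips_simplices E"
    using assms unfolding rips_simplices_def by auto
  then have "rips_carrier F \<subseteq> rips_carrier E"
    unfolding rips_carrier_def by blast
  moreover have "openin (rips_top F) {x \<in> rips_carrier F. x \<in> U}" if "openin (rips_top E) U" for U
  proof -
    have "{x \<in> rips_carrier F. x \<in> U} \<inter> simplex_real \<sigma> = U \<inter> simplex_real \<sigma>" if "\<sigma> \<in> rips_simplices F" for \<sigma>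
      using simplex_subset_rips_carrier[OF that] by auto
    then show ?thesis
      using that simplices unfolding openin_rips_top by auto
  qed
  ultimately show ?thesis
    unfolding continuous_map topspace_rips_top by auto
qed

lemma pathin_rips_mono: "\<lbrakk>pathin (rips_top F) p; F \<subseteq> E\<rbrakk> \<Longrightarrow> pathin (rips_top E) p"
  using pathin_compose[OF _ continuous_map_rips_inclusion] by (metis id_comp)

lemma continuous_map_simplex_inclusion:
  assumes "\<sigma> \<in> rips_simplices E"
  shows "continuous_map (top_of_set (simplex_real \<sigma>)) (rips_top E) id"
proof -
  have "{x \<in> simplex_real \<sigma>. x \<in> U} = U \<inter> simplex_real \<sigma>" for U by auto
  then show ?thesis
    using assms simplex_subset_rips_carrier[OF assms]
    unfolding continuous_map topspace_rips_top openin_rips_top by auto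
qed

lemma edge_path_at_0 [simp]: "edge_path x y 0 = vtx x"
  and edge_path_at_1 [simp]: "edge_path x y 1 = vtx y"
  by (simp_all add: edge_path_def)

lemma pathin_edge_path:
  assumes "{x, y} \<times> {x, y} \<subseteq> F"
  shows "pathin (rips_top F) (edge_path x y)"
proof -
  have edge: "{x, y} \<in> rips_simplices F"
    using assms unfolding rips_simplices_def by auto
  have "continuous_on {0..1} (edge_path x y)"
    unfolding edge_path_def by (intro continuous_on_coordinatewise_then_product continuous_intros)
  moreover have "edge_path x y t \<in> simplex_real {x, y}" if "t \<in> {0..1}" for t
  proof -
    have "sum (edge_path x y t) {x, y} = 1"
      by (cases "x = y") (auto simp: edge_path_def vtx_def)
    then show ?thesis using that unfolding simplex_real_def by (auto simp: edge_path_def vtx_def)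
  qed
  ultimately have "pathin (top_of_set (simplex_real {x, y})) (edge_path x y)"
    by (auto simp: pathin_def)
  then show ?thesis
    using pathin_compose[OF _ continuous_map_simplex_inclusion[OF edge]] by simp
qed

lemma gen_path_component:
  assumes "gen_path U x y c" and "E \<in> entourages U"
  shows "pathin (rips_top E) (c E)" and "c E 0 = vtx x" and "c E 1 = vtx y"
  using assms unfolding gen_path_def by auto

lemma gen_path_compatible:
  assumes "gen_path U x y c" and "E \<in> entourages U" and "F \<in> entourages U" and "F \<subseteq> E"
  shows "path_homotopic (rips_top E) (c F) (c E)"
  using assms unfolding gen_path_def by auto

lemma gen_path_reverse:
  assumes "gen_path U x y c"
  shows "gen_path U y x (\<lambda>E. reversepath (c E))"
  using assms unfolding gen_path_def by (auto intro: pathin_reverse path_homotopic_reverse)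

lemma gen_path_join:
  assumes c: "gen_path U x y c" and d: "gen_path U y z d"
  shows "gen_path U x z (\<lambda>E. c E +++ d E)"
  unfolding gen_path_def
proof (intro conjI ballI impI)
  fix E assume E: "E \<in> entourages U"
  show "pathin (rips_top E) (c E +++ d E)"
    using gen_path_component[OF c E] gen_path_component[OF d E] by (simp add: pathin_join)
  show "(c E +++ d E) 0 = vtx x" "(c E +++ d E) 1 = vtx z"
    using gen_path_component[OF c E] gen_path_component[OF d E] by simp_all
next
  fix E F assume "E \<in> entourages U" "F \<in> entourages U" "F \<subseteq> E"
  then show "path_homotopic (rips_top E) (c F +++ d F) (c E +++ d E)"
    using gen_path_compatible[OF c] gen_path_compatible[OF d]
      gen_path_component[OF c] gen_path_component[OF d]
    by (simp add: path_homotopic_join)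
qed

lemma short_gen_path_through_loop:
  assumes a: "gen_path U x0 x a" and b: "gen_path U x0 y b" and d: "gen_path U x0 x0 d"
    and E: "E \<in> entourages U" and F: "F \<in> entourages U" "F \<subseteq> E"
    and xy: "(x, y) \<in> F" and edge: "pathin (rips_top F) (edge_path x y)"
    and loop: "path_homotopic (rips_top E) (d E) ((a F +++ edge_path x y) +++ reversepath (b F))"
  shows "short_gen_path U E x y (\<lambda>G. reversepath (a G) +++ (d G +++ b G))"
proof -
  let ?T = "rips_top E" and ?e = "edge_path x y"
  have gen: "gen_path U x y (\<lambda>G. reversepath (a G) +++ (d G +++ b G))"
    using gen_path_join[OF gen_path_reverse[OF a] gen_path_join[OF d b]] .
  note aE = gen_path_component[OF a E] and bE = gen_path_component[OF b E]
    and dE = gen_path_component[OF d E]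
  have eE: "pathin ?T ?e" using edge F(2) by (rule pathin_rips_mono)
  have "path_homotopic ?T (d E) ((a E +++ ?e) +++ reversepath (b E))"
  proof -
    have "path_homotopic ?T (a F +++ ?e) (a E +++ ?e)"
      using gen_path_compatible[OF a E F] gen_path_component[OF a F(1)] eE
      by (simp add: path_homotopic_join path_homotopic_refl)
    then have "path_homotopic ?T ((a F +++ ?e) +++ reversepath (b F)) ((a E +++ ?e) +++ reversepath (b E))"
      using path_homotopic_reverse[OF gen_path_compatible[OF b E F]] gen_path_component[OF b F(1)]
      by (simp add: path_homotopic_join)
    with loop show ?thesis
      by (rule path_homotopic_trans)
  qed
  then have "path_homotopic ?T (reversepath (a E) +++ (d E +++ b E))
               (reversepath (a E) +++ (((a E +++ ?e) +++ reversepath (b E)) +++ b E))"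
    using aE bE dE by (simp add: path_homotopic_join path_homotopic_refl pathin_reverse)
  also have "path_homotopic ?T \<dots> (reversepath (a E) +++ (a E +++ ?e))"
    using aE bE eE
    by (simp add: path_homotopic_join path_homotopic_refl path_homotopic_cancel_right pathin_reverse pathin_join)
  also have "path_homotopic ?T \<dots> ?e"
    using aE eE by (simp add: path_homotopic_cancel_left)
  finally show ?thesis
    using gen xy F(2) unfolding short_gen_path_def by auto
qed

(* Entourages contain the diagonal, and the symmetric part of an entourage is an
   entourage; together these make every edge of a symmetric entourage an edge
   path of its Rips complex. *)
lemma entourage_refl:
  assumes "F \<in> entourages (uniformity :: ('a::uniform_space \<times> 'a) filter)"
  shows "(x, x) \<in> F"
  using assms uniformity_refl unfolding entourages_def by auto

lemma entourage_symmetric_part: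
  assumes "F \<in> entourages (uniformity :: ('a::uniform_space \<times> 'a) filter)"
  shows "F \<inter> converse F \<in> entourages (uniformity :: ('a \<times> 'a) filter)"
proof -
  have F: "eventually (\<lambda>p. p \<in> F) (uniformity :: ('a \<times> 'a) filter)"
    using assms unfolding entourages_def by simp
  have "eventually (\<lambda>p. p \<in> F \<and> (\<lambda>(x, y). (y, x) \<in> F) p) (uniformity :: ('a \<times> 'a) filter)"
    using eventually_conj[OF F uniformity_sym[OF F]] .
  then show ?thesis
    unfolding entourages_def by (auto elim: eventually_mono)
qed

theorem mainTheorem9:
  fixes x0 :: "'a::uniform_space"
  assumes "joinable (uniformity :: ('a \<times> 'a) filter)"
    and "pro_pi1_strong_ML (uniformity :: ('a \<times> 'a) filter) x0"
  shows "uniformly_joinable (uniformity :: ('a \<times> 'a) filter)"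
  unfolding uniformly_joinable_def
proof
  fix E :: "('a \<times> 'a) set"
  assume E: "E \<in> entourages uniformity"
  obtain F where F: "F \<in> entourages uniformity" "F \<subseteq> E"
    and lift: "\<And>c. pathin (rips_top F) c \<and> c 0 = vtx x0 \<and> c 1 = vtx x0 \<Longrightarrow>
               \<exists>d. gen_path uniformity x0 x0 d \<and> path_homotopic (rips_top E) (d E) c"
    using assms(2) E unfolding pro_pi1_strong_ML_def by blast
  show "\<exists>F\<in>entourages uniformity. \<forall>x y. (x, y) \<in> F \<longrightarrow> (\<exists>c. short_gen_path uniformity E x y c)"
  proof (intro bexI allI impI)
    show "F \<inter> converse F \<in> entourages uniformity"
      using F(1) by (rule entourage_symmetric_part)
    fix x y assume "(x, y) \<in> F \<inter> converse F"
    then have xy: "(x, y) \<in> F" and edge: "pathin (rips_top F) (edge_path x y)"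
      using entourage_refl[OF F(1)] by (auto intro!: pathin_edge_path)
    obtain a b where a: "gen_path uniformity x0 x a" and b: "gen_path uniformity x0 y b"
      using assms(1) unfolding joinable_def by blast
    let ?L = "(a F +++ edge_path x y) +++ reversepath (b F)"
    have "pathin (rips_top F) ?L \<and> ?L 0 = vtx x0 \<and> ?L 1 = vtx x0"
      using gen_path_component[OF a F(1)] gen_path_component[OF b F(1)] edge
      by (simp add: pathin_join pathin_reverse)
    then obtain d where "gen_path uniformity x0 x0 d" "path_homotopic (rips_top E) (d E) ?L"
      using lift by blast
    then show "\<exists>c. short_gen_path uniformity E x y c"
      using short_gen_path_through_loop[OF a b _ E F xy edge] by blast
  qed
qed

end
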